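(* Let $(G,H)$ be an odd pair, i.e. $H<G$ are countable abelian groups such that every element of $G/H$ has odd order. Then the exact sequence \[0\to H\overset{i}{\to}G\overset{\pi}{\to}G/H\to0\] is coarsely split.
   Context: A proper left invariant metric on a countable group is $d(g,h)=\|g^{-1}h\|$ for a proper norm $\|\cdot\|$ ($\|g\|=0$ iff $g=1$, $\|g\|=\|g^{-1}\|$, $\|gh\|\le\|g\|+\|h\|$, finite balls). A map $f$ is coarse if for every $\delta>0$ there is $\epsilon>0$ with $d(x,y)\le\delta\Rightarrow d(f(x),f(y))\le\epsilon$; a coarse equivalence is a coarse map having a coarse inverse up to bounded distance. An exact sequence $0\to K\overset{i}{\to}G\overset{\pi}{\to}Q\to0$ is coarsely split if there are proper left invariant metrics $d_K,d_G,d_Q$ and a coarse equivalence $f:(G,d_G)\to(K\oplus Q,d_K\oplus d_Q)$ ($\ell_1$ sum metric) such that $f\circ i$ is at bounded distance from $k\mapsto(k,0)$ and $\pi'\circ f$ is at bounded distance from $\pi$, where $\pi':K\oplus Q\to Q$ is the projection. *)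

theory Defs
  imports "HOL-Algebra.Algebra" "HOL-Library.Countable_Set"
begin

definition proper_norm :: "('a, 'b) monoid_scheme \<Rightarrow> ('a \<Rightarrow> real) \<Rightarrow> bool" where
  "proper_norm G N \<longleftrightarrow>
     (\<forall>g\<in>carrier G. N g = 0 \<longleftrightarrow> g = \<one>\<^bsub>G\<^esub>) \<and>
     (\<forall>g\<in>carrier G. N g = N (m_inv G g)) \<and>
     (\<forall>g\<in>carrier G. \<forall>h\<in>carrier G. N (monoid.mult G g h) \<le> N g + N h) \<and>
     (\<forall>r::real. finite {g\<in>carrier G. N g \<le> r})"

definition norm_metric :: "('a, 'b) monoid_scheme \<Rightarrow> ('a \<Rightarrow> real) \<Rightarrow> 'a \<Rightarrow> 'a \<Rightarrow> real" where
  "norm_metric G N g h = N (monoid.mult G (m_inv G g) h)"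

definition coarse_map :: "'x set \<Rightarrow> ('x \<Rightarrow> 'x \<Rightarrow> real) \<Rightarrow> 'y set \<Rightarrow> ('y \<Rightarrow> 'y \<Rightarrow> real)
    \<Rightarrow> ('x \<Rightarrow> 'y) \<Rightarrow> bool" where
  "coarse_map A dA B dB u \<longleftrightarrow> u ` A \<subseteq> B \<and>
     (\<forall>dlt>0. \<exists>eps>0. \<forall>x\<in>A. \<forall>y\<in>A. dA x y \<le> dlt \<longrightarrow> dB (u x) (u y) \<le> eps)"

definition bounded_distance :: "'x set \<Rightarrow> ('y \<Rightarrow> 'y \<Rightarrow> real) \<Rightarrow> ('x \<Rightarrow> 'y) \<Rightarrow> ('x \<Rightarrow> 'y) \<Rightarrow> bool" where
  "bounded_distance A d u v \<longleftrightarrow> (\<exists>C. \<forall>x\<in>A. d (u x) (v x) \<le> C)"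

definition coarse_equivalence :: "'x set \<Rightarrow> ('x \<Rightarrow> 'x \<Rightarrow> real) \<Rightarrow> 'y set \<Rightarrow> ('y \<Rightarrow> 'y \<Rightarrow> real)
    \<Rightarrow> ('x \<Rightarrow> 'y) \<Rightarrow> bool" where
  "coarse_equivalence A dA B dB u \<longleftrightarrow> coarse_map A dA B dB u \<and>
     (\<exists>v. coarse_map B dB A dA v \<and>
          bounded_distance A dA (v \<circ> u) id \<and> bounded_distance B dB (u \<circ> v) id)"

definition sum_metric :: "('k \<Rightarrow> 'k \<Rightarrow> real) \<Rightarrow> ('q \<Rightarrow> 'q \<Rightarrow> real) \<Rightarrow> 'k \<times> 'q \<Rightarrow> 'k \<times> 'q \<Rightarrow> real" where
  "sum_metric dK dQ a b = dK (fst a) (fst b) + dQ (snd a) (snd b)"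

definition coarsely_split ::
  "('k, 'c) monoid_scheme \<Rightarrow> ('g, 'd) monoid_scheme \<Rightarrow> ('q, 'e) monoid_scheme
     \<Rightarrow> ('k \<Rightarrow> 'g) \<Rightarrow> ('g \<Rightarrow> 'q) \<Rightarrow> bool" where
  "coarsely_split K G Q i \<pi> \<longleftrightarrow>
     (\<exists>NK NG NQ f. proper_norm K NK \<and> proper_norm G NG \<and> proper_norm Q NQ \<and>
        coarse_equivalence (carrier G) (norm_metric G NG)
          (carrier K \<times> carrier Q) (sum_metric (norm_metric K NK) (norm_metric Q NQ)) f \<and>
        bounded_distance (carrier K) (sum_metric (norm_metric K NK) (norm_metric Q NQ))
          (f \<circ> i) (\<lambda>k. (k, \<one>\<^bsub>Q\<^esub>)) \<and>
        bounded_distance (carrier G) (norm_metric Q NQ) (snd \<circ> f) \<pi>)"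

end

theory Submission
  imports Defs
begin

text \<open>Since every element of \<open>Q = G/H\<close> has finite (odd) order, the countable abelian group \<open>Q\<close> is
  the increasing union of the finite subgroups \<open>\<langle>e\<^sub>0, \<dots>, e\<^sub>k\<^sub>-\<^sub>1\<rangle>\<close> generated by an enumeration
  \<open>e\<close> of \<open>Q\<close>. Lifting digit expansions along this chain gives a section \<open>s\<close> of \<open>G \<rightarrow> Q\<close> with
  \<open>s 1 = 1\<close> such that for every fixed \<open>p\<close> the increments \<open>s(qp) s(q)\<^sup>-\<^sup>1\<close> take only finitely many
  values. For arbitrary proper norms on \<open>H\<close>, \<open>G\<close> and \<open>Q\<close>, the bijection \<open>g \<mapsto> (g s(Hg)\<^sup>-\<^sup>1, Hg)\<close>
  and its inverse \<open>(h, q) \<mapsto> h s(q)\<close> are then coarse: by left invariance, the distance between the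
  images of two points depends only on their difference and on one such increment, so it ranges over
  a finite set once the difference is confined to a ball.\<close>

section \<open>Proper norms on countable groups\<close>

lemma proper_normD:
  assumes "proper_norm G N"
  shows "g \<in> carrier G \<Longrightarrow> N g = 0 \<longleftrightarrow> g = \<one>\<^bsub>G\<^esub>"
    and "g \<in> carrier G \<Longrightarrow> N (inv\<^bsub>G\<^esub> g) = N g"
    and "g \<in> carrier G \<Longrightarrow> h \<in> carrier G \<Longrightarrow> N (g \<otimes>\<^bsub>G\<^esub> h) \<le> N g + N h"
    and "finite {g \<in> carrier G. N g \<le> r}"
  using assms unfolding proper_norm_def by auto

context group
begin

lemma mult_inv_cancel_left [simp]: "x \<in> carrier G \<Longrightarrow> y \<in> carrier G \<Longrightarrow> x \<otimes> (inv x \<otimes> y) = y"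
  by (simp add: m_assoc [symmetric])

lemma proper_norm_nonneg:
  assumes N: "proper_norm G N" and g: "g \<in> carrier G"
  shows "0 \<le> N g"
proof -
  have "N \<one> \<le> N g + N (inv g)"
    using proper_normD(3)[OF N g inv_closed[OF g]] g by simp
  then show ?thesis
    using proper_normD(1)[OF N one_closed] proper_normD(2)[OF N g] by simp
qed

lemma norm_metric_self:
  assumes "proper_norm G N" and "g \<in> carrier G"
  shows "norm_metric G N g g = 0"
  using proper_normD(1)[OF assms(1)] assms(2) by (simp add: norm_metric_def)

lemma proper_norm_of_filtration:
  assumes W0: "W 0 = {\<one>}"
    and W_finite: "\<And>n. finite (W n)"
    and W_mono: "\<And>m n. m \<le> n \<Longrightarrow> W m \<subseteq> W n"
    and W_mult: "\<And>g h m n. g \<in> W m \<Longrightarrow> h \<in> W n \<Longrightarrow> g \<otimes> h \<in> W (m + n)"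
    and W_inv: "\<And>g n. g \<in> W n \<Longrightarrow> inv g \<in> W n"
    and W_exhaust: "\<And>g. g \<in> carrier G \<Longrightarrow> \<exists>n. g \<in> W n"
  shows "proper_norm G (\<lambda>g. real (LEAST n. g \<in> W n))"
proof -
  define L where "L g = (LEAST n. g \<in> W n)" for g
  have L_in: "g \<in> W (L g)" if "g \<in> carrier G" for g
    unfolding L_def using W_exhaust[OF that] by (rule LeastI_ex)
  have L_le: "g \<in> W n \<Longrightarrow> L g \<le> n" for g n
    unfolding L_def by (rule Least_le)
  have "proper_norm G (\<lambda>g. real (L g))"
    unfolding proper_norm_def
  proof (intro conjI ballI allI)
    fix g assume g: "g \<in> carrier G"
    show "real (L g) = 0 \<longleftrightarrow> g = \<one>"
    proof
      assume "real (L g) = 0"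
      then show "g = \<one>" using L_in[OF g] W0 by simp
    next
      assume "g = \<one>"
      then show "real (L g) = 0" using L_le[of g 0] W0 by simp
    qed
    have "L (inv g) \<le> L g"
      using L_le[OF W_inv[OF L_in[OF g]]] .
    moreover have "L g \<le> L (inv g)"
      using L_le[OF W_inv[OF L_in[OF inv_closed[OF g]]]] g by simp
    ultimately show "real (L g) = real (L (inv g))" by simp
    fix h assume h: "h \<in> carrier G"
    show "real (L (g \<otimes> h)) \<le> real (L g) + real (L h)"
      using L_le[OF W_mult[OF L_in[OF g] L_in[OF h]]] by simp
  next
    fix r :: real
    have "{g \<in> carrier G. real (L g) \<le> r} \<subseteq> W (nat \<lfloor>r\<rfloor>)"
    proof clarify
      fix g assume g: "g \<in> carrier G" and "real (L g) \<le> r"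
      then have "L g \<le> nat \<lfloor>r\<rfloor>" by linarith
      then show "g \<in> W (nat \<lfloor>r\<rfloor>)" using W_mono L_in[OF g] by blast
    qed
    then show "finite {g \<in> carrier G. real (L g) \<le> r}"
      using W_finite finite_subset by blast
  qed
  then show ?thesis unfolding L_def .
qed

definition word_prod :: "'a list \<Rightarrow> 'a" where
  "word_prod xs = foldr (\<otimes>) xs \<one>"

lemma word_prod_closed: "set xs \<subseteq> carrier G \<Longrightarrow> word_prod xs \<in> carrier G"
  by (induction xs) (auto simp: word_prod_def)

lemma word_prod_append:
  "set xs \<subseteq> carrier G \<Longrightarrow> set ys \<subseteq> carrier G \<Longrightarrow> word_prod (xs @ ys) = word_prod xs \<otimes> word_prod ys"
  by (induction xs) (auto simp: word_prod_def m_assoc word_prod_closed[unfolded word_prod_def])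

lemma word_prod_inv:
  "set xs \<subseteq> carrier G \<Longrightarrow> inv (word_prod xs) = word_prod (map (\<lambda>x. inv x) (rev xs))"
proof (induction xs)
  case Nil
  then show ?case by (simp add: word_prod_def)
next
  case (Cons x xs)
  then have "inv (word_prod (x # xs)) = inv (word_prod xs) \<otimes> inv x"
    by (simp add: word_prod_def inv_mult_group word_prod_closed[unfolded word_prod_def])
  also have "\<dots> = word_prod (map (\<lambda>x. inv x) (rev xs) @ [inv x])"
    using Cons by (subst word_prod_append) (auto simp: word_prod_def)
  finally show ?case by simp
qed

lemma proper_norm_exists:
  assumes "countable (carrier G)"
  obtains N where "proper_norm G N"
proof -
  define e where "e = from_nat_into (carrier G)"
  have e_range: "range e = carrier G"
    unfolding e_def using range_from_nat_into[OF _ assms] by auto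
  define S where "S n = e ` {..n} \<union> (\<lambda>x. inv x) ` e ` {..n}" for n
  have S_carrier: "S n \<subseteq> carrier G" for n
    using e_range unfolding S_def by auto
  have S_mono: "m \<le> n \<Longrightarrow> S m \<subseteq> S n" for m n
    unfolding S_def by auto
  have S_inv: "x \<in> S n \<Longrightarrow> inv x \<in> S n" for x n
  proof -
    have "inv (inv (e k)) = e k" for k
      using e_range inv_inv[of "e k"] by blast
    then show "x \<in> S n \<Longrightarrow> inv x \<in> S n"
      unfolding S_def by force
  qed
  define W where "W n = word_prod ` {xs. set xs \<subseteq> S n \<and> length xs \<le> n}" for n
  show ?thesis
  proof (rule that, rule proper_norm_of_filtration[of W])
    show "W 0 = {\<one>}"
      unfolding W_def by (auto simp: word_prod_def)
    show "finite (W n)" for n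
      unfolding W_def S_def by (intro finite_imageI finite_lists_length_le) auto
    show "m \<le> n \<Longrightarrow> W m \<subseteq> W n" for m n
      unfolding W_def using S_mono by fastforce
  next
    fix g h m n assume "g \<in> W m" "h \<in> W n"
    then obtain xs ys where xs: "set xs \<subseteq> S m" "length xs \<le> m" "g = word_prod xs"
      and ys: "set ys \<subseteq> S n" "length ys \<le> n" "h = word_prod ys"
      unfolding W_def by auto
    have "g \<otimes> h = word_prod (xs @ ys)"
      using xs ys S_carrier[of m] S_carrier[of n] word_prod_append[of xs ys] by auto
    moreover have "set (xs @ ys) \<subseteq> S (m + n)"
      using xs ys S_mono[of m "m + n"] S_mono[of n "m + n"] by auto
    ultimately show "g \<otimes> h \<in> W (m + n)"
      unfolding W_def using xs ys by force
  next
    fix g n assume "g \<in> W n"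
    then obtain xs where xs: "set xs \<subseteq> S n" "length xs \<le> n" "g = word_prod xs"
      unfolding W_def by auto
    then have "inv g = word_prod (map (\<lambda>x. inv x) (rev xs))"
      using S_carrier[of n] word_prod_inv[of xs] by auto
    moreover have "set (map (\<lambda>x. inv x) (rev xs)) \<subseteq> S n"
      using xs S_inv by auto
    ultimately show "inv g \<in> W n"
      unfolding W_def using xs by force
  next
    fix g assume "g \<in> carrier G"
    then obtain k where "g = e k" using e_range by auto
    then have "set [g] \<subseteq> S (Suc k)"
      unfolding S_def by auto
    then have "word_prod [g] \<in> W (Suc k)"
      unfolding W_def by force
    then show "\<exists>n. g \<in> W n"
      using \<open>g \<in> carrier G\<close> by (auto simp: word_prod_def)
  qed
qed

end

section \<open>Sections of torsion quotients with finitely many increments\<close>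

definition section_increments ::
  "('g, 'c) monoid_scheme \<Rightarrow> ('q, 'd) monoid_scheme \<Rightarrow> ('q \<Rightarrow> 'g) \<Rightarrow> 'q \<Rightarrow> 'g set" where
  "section_increments G Q s p = (\<lambda>q. s (q \<otimes>\<^bsub>Q\<^esub> p) \<otimes>\<^bsub>G\<^esub> inv\<^bsub>G\<^esub> (s q)) ` carrier Q"

text \<open>An enumeration \<open>e\<close> of a torsion abelian group exhibits it as the union of the finite subgroups
  \<open>stage k = \<langle>e 0, \<dots>, e (k - 1)\<rangle>\<close>. Every element of \<open>stage (Suc k)\<close> is \<open>r \<otimes> e k [^] d\<close> with
  \<open>r \<in> stage k\<close> and a unique \<open>digit k x = d < rel_order k\<close>.\<close>

locale torsion_enumeration = comm_group Q for Q (structure) +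
  fixes e :: "nat \<Rightarrow> 'a"
  assumes enum_range: "range e = carrier Q"
    and torsion: "\<And>x. x \<in> carrier Q \<Longrightarrow> 0 < ord x"
begin

lemma enum_closed [simp]: "e k \<in> carrier Q"
  using enum_range by auto

primrec stage :: "nat \<Rightarrow> 'a set" where
  "stage 0 = {\<one>}"
| "stage (Suc k) = {r \<otimes> e k [^] (c::int) | r c. r \<in> stage k}"

lemma stage_SucI: "r \<in> stage k \<Longrightarrow> r \<otimes> e k [^] (c::int) \<in> stage (Suc k)"
  by auto

lemma subgroup_stage: "subgroup (stage k) Q"
proof (induction k)
  case 0
  then show ?case by (simp add: triv_subgroup)
next
  case (Suc k)
  interpret S: subgroup "stage k" Q by (rule Suc)
  show ?case
  proof (rule subgroupI)
    show "stage (Suc k) \<subseteq> carrier Q" by auto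
    show "stage (Suc k) \<noteq> {}" using stage_SucI[OF S.one_closed] by blast
  next
    fix x assume "x \<in> stage (Suc k)"
    then obtain r c where rc: "r \<in> stage k" "x = r \<otimes> e k [^] (c::int)" by auto
    then have "inv x = inv r \<otimes> e k [^] (- c)"
      by (simp add: inv_mult int_pow_neg m_comm)
    then show "inv x \<in> stage (Suc k)" using rc by auto
  next
    fix x y assume "x \<in> stage (Suc k)" "y \<in> stage (Suc k)"
    then obtain r c r' c' where rc: "r \<in> stage k" "x = r \<otimes> e k [^] (c::int)"
      and rc': "r' \<in> stage k" "y = r' \<otimes> e k [^] (c'::int)" by auto
    then have "x \<otimes> y = (r \<otimes> r') \<otimes> e k [^] (c + c')"
      by (simp add: int_pow_mult m_ac)
    then show "x \<otimes> y \<in> stage (Suc k)" using rc rc' by auto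
  qed
qed

lemma stage_subset_carrier: "stage k \<subseteq> carrier Q"
  using subgroup_stage subgroup.subset by blast

lemma stage_closed [intro]: "x \<in> stage k \<Longrightarrow> x \<in> carrier Q"
  using stage_subset_carrier by blast

lemma stage_subset_Suc: "stage k \<subseteq> stage (Suc k)"
proof
  fix x assume x: "x \<in> stage k"
  then have "x = x \<otimes> e k [^] (0::int)"
    using stage_subset_carrier[of k] by auto
  then show "x \<in> stage (Suc k)" using stage_SucI[OF x] by metis
qed

lemma stage_mono: "j \<le> k \<Longrightarrow> stage j \<subseteq> stage k"
  by (induction k rule: dec_induct) (use stage_subset_Suc in auto)

lemma enum_in_stage: "e k \<in> stage (Suc k)"
proof -
  have "e k = \<one> \<otimes> e k [^] (1::int)" by simp
  then show ?thesis using stage_SucI[OF subgroup.one_closed[OF subgroup_stage]] by metis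
qed

lemma stage_exhaust: "x \<in> carrier Q \<Longrightarrow> \<exists>k. x \<in> stage k"
  using enum_range enum_in_stage by (metis imageE)

definition rel_order :: "nat \<Rightarrow> nat" where
  "rel_order k = (LEAST n. 0 < n \<and> e k [^] n \<in> stage k)"

lemma rel_order:
  shows rel_order_pos: "0 < rel_order k"
    and pow_rel_order: "e k [^] rel_order k \<in> stage k"
    and pow_below_rel_order: "0 < n \<Longrightarrow> n < rel_order k \<Longrightarrow> e k [^] n \<notin> stage k"
proof -
  have "0 < ord (e k) \<and> e k [^] ord (e k) \<in> stage k"
    using torsion[of "e k"] subgroup.one_closed[OF subgroup_stage] by simp
  then show "0 < rel_order k" "e k [^] rel_order k \<in> stage k"
    unfolding rel_order_def by (metis (mono_tags, lifting) LeastI)+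
  show "0 < n \<Longrightarrow> n < rel_order k \<Longrightarrow> e k [^] n \<notin> stage k"
    unfolding rel_order_def using not_less_Least by blast
qed

lemma digit_exists:
  assumes "x \<in> stage (Suc k)"
  shows "\<exists>d. d < rel_order k \<and> x \<otimes> inv (e k [^] d) \<in> stage k"
proof -
  obtain r c where rc: "r \<in> stage k" "x = r \<otimes> e k [^] (c::int)" using assms by auto
  have r: "r \<in> carrier Q" using rc by blast
  define M where "M = int (rel_order k)"
  have M_pos: "M > 0" using rel_order_pos M_def by simp
  define d where "d = nat (c mod M)"
  have d: "int d = c mod M" unfolding d_def using M_pos by simp
  have eM: "e k [^] M \<in> stage k" unfolding M_def int_pow_int using pow_rel_order .
  have "e k [^] c = e k [^] (c mod M + M * (c div M))" by simp
  also have "\<dots> = e k [^] d \<otimes> (e k [^] M) [^] (c div M)"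
    by (metis d enum_closed int_pow_int int_pow_mult int_pow_pow)
  finally have "x \<otimes> inv (e k [^] d) = r \<otimes> (e k [^] M) [^] (c div M)"
    using rc r eM by (simp add: inv_solve_right' m_ac)
  also have "\<dots> \<in> stage k"
    using rc eM subgroup_int_pow_closed[OF subgroup_stage] subgroup.m_closed[OF subgroup_stage] by blast
  finally have "x \<otimes> inv (e k [^] d) \<in> stage k" .
  moreover have "d < rel_order k" using d M_def pos_mod_bound[OF M_pos, of c] by linarith
  ultimately show ?thesis by blast
qed

lemma digit_unique:
  assumes x: "x \<in> carrier Q" and "d < rel_order k" "d' < rel_order k"
    and "x \<otimes> inv (e k [^] d) \<in> stage k" "x \<otimes> inv (e k [^] d') \<in> stage k"
  shows "d = d'"
proof -
  interpret S: subgroup "stage k" Q by (rule subgroup_stage)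
  have "\<not> (d < d')" if "d < rel_order k" "d' < rel_order k"
    "x \<otimes> inv (e k [^] d) \<in> stage k" "x \<otimes> inv (e k [^] d') \<in> stage k" for d d'
  proof
    assume "d < d'"
    have "e k [^] d' = e k [^] (d' - d) \<otimes> e k [^] d"
      using \<open>d < d'\<close> by (simp add: nat_pow_mult)
    then have "inv (x \<otimes> inv (e k [^] d')) \<otimes> (x \<otimes> inv (e k [^] d)) = e k [^] (d' - d)"
      using x by (simp add: inv_mult_group m_ac)
    moreover have "inv (x \<otimes> inv (e k [^] d')) \<otimes> (x \<otimes> inv (e k [^] d)) \<in> stage k"
      using that by auto
    ultimately show False
      using pow_below_rel_order[of "d' - d" k] \<open>d < d'\<close> that by auto
  qed
  then show ?thesis using assms by (meson linorder_neqE_nat)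
qed

definition digit :: "nat \<Rightarrow> 'a \<Rightarrow> nat" where
  "digit k x = (SOME d. d < rel_order k \<and> x \<otimes> inv (e k [^] d) \<in> stage k)"

lemma digit: "x \<in> stage (Suc k) \<Longrightarrow> digit k x < rel_order k \<and> x \<otimes> inv (e k [^] digit k x) \<in> stage k"
  unfolding digit_def using digit_exists by (rule someI_ex)

lemma digit_stage:
  assumes x: "x \<in> stage k"
  shows "digit k x = 0"
proof (rule digit_unique)
  show "x \<in> carrier Q" using x stage_subset_carrier by blast
  show "digit k x < rel_order k" "x \<otimes> inv (e k [^] digit k x) \<in> stage k"
    using digit x stage_subset_Suc by blast+
  show "0 < rel_order k" by (rule rel_order_pos)
  show "x \<otimes> inv (e k [^] (0::nat)) \<in> stage k"
    using x stage_closed[OF x] by simp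
qed

lemma digit_mult_stage:
  assumes x: "x \<in> stage (Suc k)" and p: "p \<in> stage k"
  shows "digit k (x \<otimes> p) = digit k x"
proof -
  interpret S: subgroup "stage k" Q by (rule subgroup_stage)
  have xc: "x \<in> carrier Q" and pc: "p \<in> carrier Q"
    using x p stage_subset_carrier by auto
  have xp: "x \<otimes> p \<in> stage (Suc k)"
    using x p stage_subset_Suc subgroup.m_closed[OF subgroup_stage] by blast
  have "(x \<otimes> p) \<otimes> inv (e k [^] digit k x) = (x \<otimes> inv (e k [^] digit k x)) \<otimes> p"
    using xc pc by (simp add: m_ac)
  also have "\<dots> \<in> stage k" using digit[OF x] p by auto
  finally show ?thesis
    using digit_unique[where x = "x \<otimes> p" and k = k] digit[OF xp] digit[OF x] xc pc by blast
qed

lemma finite_stage: "finite (stage k)"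
proof (induction k)
  case 0
  then show ?case by simp
next
  case (Suc k)
  have "stage (Suc k) \<subseteq> (\<lambda>(r, d). r \<otimes> e k [^] d) ` (stage k \<times> {..<rel_order k})"
  proof
    fix x assume x: "x \<in> stage (Suc k)"
    then have "x = (x \<otimes> inv (e k [^] digit k x)) \<otimes> e k [^] digit k x"
      using stage_closed[OF x] by (simp add: m_assoc)
    then show "x \<in> (\<lambda>(r, d). r \<otimes> e k [^] d) ` (stage k \<times> {..<rel_order k})"
      using digit[OF x] by force
  qed
  then show ?case using Suc finite_subset by blast
qed

end

text \<open>Lifting the digit expansion \<open>x = e 0 [^] d\<^sub>0 \<otimes> \<dots> \<otimes> e (k - 1) [^] d\<^sub>k\<^sub>-\<^sub>1\<close> digit by digit gives a
  section of \<open>pj\<close> on \<open>stage k\<close>. Multiplying by \<open>p \<in> stage j\<close> leaves the digits beyond position \<open>j\<close>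
  untouched, so the increments \<open>s (x \<otimes> p) \<otimes> inv (s x)\<close> depend only on the first \<open>j\<close> digits.\<close>

locale torsion_extension = torsion_enumeration Q e for Q (structure) and e +
  fixes G :: "('g, 'c) monoid_scheme" and pj :: "'g \<Rightarrow> 'a"
  assumes group_G: "group G" and pj_hom: "pj \<in> hom G Q" and pj_surj: "pj ` carrier G = carrier Q"
begin

sublocale G: group G by (rule group_G)

definition lift :: "nat \<Rightarrow> 'g" where
  "lift k = (SOME g. g \<in> carrier G \<and> pj g = e k)"

lemma lift: "lift k \<in> carrier G \<and> pj (lift k) = e k"
proof -
  have "\<exists>g. g \<in> carrier G \<and> pj g = e k"
    using pj_surj enum_closed by (metis imageE)
  then show ?thesis unfolding lift_def by (rule someI_ex)
qed

lemma lift_pow_closed: "lift k [^]\<^bsub>G\<^esub> (n::nat) \<in> carrier G"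
  using lift by simp

primrec stage_section :: "nat \<Rightarrow> 'a \<Rightarrow> 'g" where
  "stage_section 0 x = \<one>\<^bsub>G\<^esub>"
| "stage_section (Suc k) x =
     stage_section k (x \<otimes> inv (e k [^] digit k x)) \<otimes>\<^bsub>G\<^esub> lift k [^]\<^bsub>G\<^esub> digit k x"

lemma stage_section: "x \<in> stage k \<Longrightarrow> stage_section k x \<in> carrier G \<and> pj (stage_section k x) = x"
proof (induction k arbitrary: x)
  case 0
  then show ?case using hom_one[OF pj_hom group_G is_group] by simp
next
  case (Suc k)
  define y where "y = x \<otimes> inv (e k [^] digit k x)"
  have IH: "stage_section k y \<in> carrier G" "pj (stage_section k y) = y"
    using Suc.IH digit[OF Suc.prems] y_def by auto
  have "pj (lift k [^]\<^bsub>G\<^esub> digit k x) = e k [^] digit k x"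
    using hom_nat_pow[OF pj_hom conjunct1[OF lift] group_G is_group] lift by simp
  then have "pj (stage_section (Suc k) x) = x"
    using hom_mult[OF pj_hom IH(1) lift_pow_closed] IH stage_closed[OF Suc.prems]
    by (simp add: y_def m_assoc)
  then show ?case using IH lift_pow_closed by (simp add: y_def)
qed

lemma stage_section_stable:
  assumes x: "x \<in> stage k" and "k \<le> n"
  shows "stage_section n x = stage_section k x"
  using \<open>k \<le> n\<close>
proof (induction n rule: dec_induct)
  case base
  then show ?case by simp
next
  case (step n)
  then have "x \<in> stage n" using stage_mono x by blast
  then show ?case
    using step digit_stage stage_closed stage_section[OF x] by simp
qed

lemma stage_section_increment:
  assumes p: "p \<in> stage j" and "j \<le> k" and x: "x \<in> stage k"
  shows "stage_section k (x \<otimes> p) \<otimes>\<^bsub>G\<^esub> inv\<^bsub>G\<^esub> (stage_section k x)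
    \<in> section_increments G (Q\<lparr>carrier := stage j\<rparr>) (stage_section j) p"
  using \<open>j \<le> k\<close> x
proof (induction k arbitrary: x)
  case 0
  then show ?case unfolding section_increments_def by auto
next
  case (Suc k)
  show ?case
  proof (cases "j = Suc k")
    case True
    then show ?thesis using Suc.prems unfolding section_increments_def by auto
  next
    case False
    then have p_k: "p \<in> stage k" using Suc.prems(1) p stage_mono[of j k] by auto
    define d where "d = digit k x"
    define y where "y = x \<otimes> inv (e k [^] d)"
    have y: "y \<in> stage k" using digit[OF Suc.prems(2)] y_def d_def by simp
    have "x \<otimes> p \<otimes> inv (e k [^] d) = y \<otimes> p"
      using stage_closed[OF Suc.prems(2)] stage_closed[OF p_k] by (simp add: y_def m_ac)
    moreover have "digit k (x \<otimes> p) = d"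
      using digit_mult_stage[OF Suc.prems(2) p_k] d_def by simp
    ultimately have "stage_section (Suc k) (x \<otimes> p) \<otimes>\<^bsub>G\<^esub> inv\<^bsub>G\<^esub> (stage_section (Suc k) x)
        = stage_section k (y \<otimes> p) \<otimes>\<^bsub>G\<^esub> inv\<^bsub>G\<^esub> (stage_section k y)"
      using stage_section[OF y] stage_section[of "y \<otimes> p" k] y p_k lift_pow_closed
        subgroup.m_closed[OF subgroup_stage]
      by (simp add: y_def d_def G.inv_mult_group G.m_assoc)
    then show ?thesis using Suc.IH y False Suc.prems(1) by simp
  qed
qed

definition level :: "'a \<Rightarrow> nat" where
  "level x = (LEAST k. x \<in> stage k)"

definition sect :: "'a \<Rightarrow> 'g" where
  "sect x = stage_section (level x) x"

lemma stage_level: "x \<in> carrier Q \<Longrightarrow> x \<in> stage (level x)"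
  unfolding level_def by (rule LeastI_ex) (rule stage_exhaust)

lemma sect_eq_stage_section: "x \<in> stage k \<Longrightarrow> sect x = stage_section k x"
  unfolding sect_def level_def
  using stage_section_stable[OF LeastI[of "\<lambda>k. x \<in> stage k"] Least_le[of "\<lambda>k. x \<in> stage k"]]
  by simp

lemma sect: "x \<in> carrier Q \<Longrightarrow> sect x \<in> carrier G \<and> pj (sect x) = x"
  unfolding sect_def using stage_section stage_level by blast

lemma sect_one: "sect \<one> = \<one>\<^bsub>G\<^esub>"
  using sect_eq_stage_section[of \<one> 0] by simp

lemma finite_section_increments:
  assumes p: "p \<in> carrier Q"
  shows "finite (section_increments G Q sect p)"
proof -
  let ?j = "level p"
  have "section_increments G Q sect p
    \<subseteq> section_increments G (Q\<lparr>carrier := stage ?j\<rparr>) (stage_section ?j) p"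
  proof (clarsimp simp: section_increments_def[of G Q])
    fix q assume q: "q \<in> carrier Q"
    define k where "k = max (level q) ?j"
    have qk: "q \<in> stage k" and pk: "p \<in> stage k"
      using stage_level[OF q] stage_level[OF p] stage_mono[of "level q" k] stage_mono[of ?j k]
      unfolding k_def by auto
    then have "sect (q \<otimes> p) = stage_section k (q \<otimes> p)" and "sect q = stage_section k q"
      using sect_eq_stage_section subgroup.m_closed[OF subgroup_stage] by blast+
    then show "sect (q \<otimes> p) \<otimes>\<^bsub>G\<^esub> inv\<^bsub>G\<^esub> sect q
      \<in> section_increments G (Q\<lparr>carrier := stage ?j\<rparr>) (stage_section ?j) p"
      using stage_section_increment[OF stage_level[OF p] _ qk] k_def by simp
  qed
  moreover have "finite (section_increments G (Q\<lparr>carrier := stage ?j\<rparr>) (stage_section ?j) p)"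
    unfolding section_increments_def using finite_stage by simp
  ultimately show ?thesis using finite_subset by blast
qed

end

lemma torsion_quotient_section:
  assumes "comm_group Q" and "group G" and "pj \<in> hom G Q" and "pj ` carrier G = carrier Q"
    and "countable (carrier Q)" and "\<And>x. x \<in> carrier Q \<Longrightarrow> 0 < group.ord Q x"
  obtains s where "\<And>q. q \<in> carrier Q \<Longrightarrow> s q \<in> carrier G" "\<And>q. q \<in> carrier Q \<Longrightarrow> pj (s q) = q"
    and "s \<one>\<^bsub>Q\<^esub> = \<one>\<^bsub>G\<^esub>" and "\<And>p. p \<in> carrier Q \<Longrightarrow> finite (section_increments G Q s p)"
proof -
  interpret Q: comm_group Q by fact
  have "range (from_nat_into (carrier Q)) = carrier Q"
    using range_from_nat_into[OF _ assms(5)] by auto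
  then interpret torsion_extension Q "from_nat_into (carrier Q)" G pj
    using assms by (intro torsion_extension.intro torsion_enumeration.intro
        torsion_extension_axioms.intro torsion_enumeration_axioms.intro) auto
  show ?thesis using that sect sect_one finite_section_increments by blast
qed

section \<open>Coarse splitting along such a section\<close>

lemma coarse_mapI_finite_values:
  assumes "u ` A \<subseteq> B"
    and "\<And>dlt. \<exists>V. finite V \<and> (\<forall>x\<in>A. \<forall>y\<in>A. dA x y \<le> dlt \<longrightarrow> dB (u x) (u y) \<in> V)"
  shows "coarse_map A dA B dB u"
  unfolding coarse_map_def
proof (intro conjI allI impI assms(1))
  fix dlt :: real
  obtain V where V: "finite V" "\<forall>x\<in>A. \<forall>y\<in>A. dA x y \<le> dlt \<longrightarrow> dB (u x) (u y) \<in> V"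
    using assms(2) by blast
  have "0 \<le> Max (insert 0 V)" and "\<forall>v\<in>V. v \<le> Max (insert 0 V)"
    using V(1) by simp_all
  then show "\<exists>eps>0. \<forall>x\<in>A. \<forall>y\<in>A. dA x y \<le> dlt \<longrightarrow> dB (u x) (u y) \<le> eps"
    using V(2) by (intro exI[of _ "Max (insert 0 V) + 1"]) force
qed

lemma bounded_distance_eqI:
  assumes "\<And>x. x \<in> A \<Longrightarrow> u x = v x" and "\<And>x. x \<in> A \<Longrightarrow> d (v x) (v x) = 0"
  shows "bounded_distance A d u v"
  unfolding bounded_distance_def using assms by (intro exI[of _ 0]) simp

locale coarse_splitting = comm_group G for G (structure) +
  fixes H :: "'a set" and s :: "'a set \<Rightarrow> 'a"
    and NK NG :: "'a \<Rightarrow> real" and NQ :: "'a set \<Rightarrow> real"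
  assumes subgroup_H: "subgroup H G"
    and s_closed: "\<And>q. q \<in> carrier (G Mod H) \<Longrightarrow> s q \<in> carrier G"
    and s_section: "\<And>q. q \<in> carrier (G Mod H) \<Longrightarrow> H #> s q = q"
    and s_one: "s \<one>\<^bsub>G Mod H\<^esub> = \<one>"
    and finite_increments: "\<And>p. p \<in> carrier (G Mod H) \<Longrightarrow> finite (section_increments G (G Mod H) s p)"
    and norm_K: "proper_norm (G\<lparr>carrier := H\<rparr>) NK"
    and norm_G: "proper_norm G NG"
    and norm_Q: "proper_norm (G Mod H) NQ"
begin

abbreviation "K \<equiv> G\<lparr>carrier := H\<rparr>"
abbreviation "dK \<equiv> norm_metric K NK"
abbreviation "dG \<equiv> norm_metric G NG"
abbreviation "dQ \<equiv> norm_metric (G Mod H) NQ"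
abbreviation "dKQ \<equiv> sum_metric dK dQ"

sublocale K: group K
  using subgroup_H by (rule subgroup.subgroup_is_group) (rule is_group)

sublocale Q: comm_group "G Mod H"
  using subgroup_H by (rule abelian_FactGroup)

sublocale pr: group_hom G "G Mod H" "\<lambda>g. H #> g"
  using normal.r_coset_hom_Mod[OF subgroup_imp_normal[OF subgroup_H]]
  by unfold_locales

text \<open>Keep quotient products as group operations instead of unfolding them to set products.\<close>
declare mult_FactGroup [simp del] one_FactGroup [simp del]

lemma carrier_K: "carrier K = H"
  by simp

lemma H_closed: "h \<in> H \<Longrightarrow> h \<in> carrier G"
  using subgroup.subset[OF subgroup_H] by blast

lemma coset_eq_one_iff: "g \<in> carrier G \<Longrightarrow> H #> g = \<one>\<^bsub>G Mod H\<^esub> \<longleftrightarrow> g \<in> H"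
  using rcos_self[OF _ subgroup_H] subgroup.rcos_const[OF subgroup_H is_group]
  by (auto simp: one_FactGroup)

lemma dK_eq: "h \<in> H \<Longrightarrow> dK h h' = NK (inv h \<otimes> h')"
  unfolding norm_metric_def using m_inv_consistent[OF subgroup_H] by simp

definition split :: "'a \<Rightarrow> 'a \<times> 'a set" where
  "split g = (g \<otimes> inv (s (H #> g)), H #> g)"

definition merge :: "'a \<times> 'a set \<Rightarrow> 'a" where
  "merge z = fst z \<otimes> s (snd z)"

lemma split_closed:
  assumes g: "g \<in> carrier G"
  shows "split g \<in> H \<times> carrier (G Mod H)"
proof -
  have q: "H #> g \<in> carrier (G Mod H)" using g by simp
  have gs: "g \<otimes> inv (s (H #> g)) \<in> carrier G"
    using g s_closed[OF q] by simp
  have "H #> (g \<otimes> inv (s (H #> g))) = \<one>\<^bsub>G Mod H\<^esub>"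
    using g s_closed[OF q] s_section[OF q] by simp
  then have "g \<otimes> inv (s (H #> g)) \<in> H"
    using coset_eq_one_iff[OF gs] by blast
  then show ?thesis
    unfolding split_def using q by simp
qed

lemma merge_closed: "z \<in> H \<times> carrier (G Mod H) \<Longrightarrow> merge z \<in> carrier G"
  unfolding merge_def using H_closed s_closed by auto

lemma merge_split: "g \<in> carrier G \<Longrightarrow> merge (split g) = g"
  unfolding merge_def split_def using s_closed by (simp add: m_assoc)

lemma split_merge:
  assumes h: "h \<in> H" and q: "q \<in> carrier (G Mod H)"
  shows "split (merge (h, q)) = (h, q)"
proof -
  have "H #> (h \<otimes> s q) = q"
    using H_closed[OF h] s_closed[OF q] s_section[OF q] coset_eq_one_iff[OF H_closed[OF h]] h q
    by simp
  then show ?thesis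
    unfolding split_def merge_def using H_closed[OF h] s_closed[OF q] by (simp add: m_assoc)
qed

lemma dist_split:
  assumes x: "x \<in> carrier G" and y: "y \<in> carrier G"
  obtains D where "D \<in> section_increments G (G Mod H) s (H #> (inv x \<otimes> y))"
    and "dKQ (split x) (split y) = NK ((inv x \<otimes> y) \<otimes> inv D) + NQ (H #> (inv x \<otimes> y))"
proof
  let ?g = "inv x \<otimes> y" and ?a = "s (H #> x)"
  have g: "?g \<in> carrier G" and a: "?a \<in> carrier G" and b: "s (H #> y) \<in> carrier G"
    using x y s_closed by simp_all
  have y_eq: "H #> y = (H #> x) \<otimes>\<^bsub>G Mod H\<^esub> (H #> ?g)"
    using x y by (simp add: m_assoc [symmetric])
  show "s (H #> y) \<otimes> inv ?a \<in> section_increments G (G Mod H) s (H #> ?g)"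
    unfolding section_increments_def y_eq using x by simp
  have "fst (split x) \<in> H" using split_closed[OF x] by auto
  then have "dK (fst (split x)) (fst (split y)) = NK (?g \<otimes> inv (s (H #> y) \<otimes> inv ?a))"
    using x y a b by (simp add: dK_eq split_def inv_mult m_ac)
  moreover have "dQ (snd (split x)) (snd (split y)) = NQ (H #> ?g)"
    unfolding norm_metric_def split_def using x y by simp
  ultimately show "dKQ (split x) (split y) = NK (?g \<otimes> inv (s (H #> y) \<otimes> inv ?a)) + NQ (H #> ?g)"
    unfolding sum_metric_def by simp
qed

lemma dist_merge:
  assumes h1: "h1 \<in> H" and h2: "h2 \<in> H"
    and q1: "q1 \<in> carrier (G Mod H)" and q2: "q2 \<in> carrier (G Mod H)"
  obtains D where "D \<in> section_increments G (G Mod H) s (inv\<^bsub>G Mod H\<^esub> q1 \<otimes>\<^bsub>G Mod H\<^esub> q2)"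
    and "dG (merge (h1, q1)) (merge (h2, q2)) = NG ((inv h1 \<otimes> h2) \<otimes> D)"
proof
  let ?p = "inv\<^bsub>G Mod H\<^esub> q1 \<otimes>\<^bsub>G Mod H\<^esub> q2"
  have "q2 = q1 \<otimes>\<^bsub>G Mod H\<^esub> ?p"
    using q1 q2 by simp
  then show "s q2 \<otimes> inv (s q1) \<in> section_increments G (G Mod H) s ?p"
    unfolding section_increments_def using q1 by (metis (no_types, lifting) image_eqI)
  show "dG (merge (h1, q1)) (merge (h2, q2)) = NG ((inv h1 \<otimes> h2) \<otimes> (s q2 \<otimes> inv (s q1)))"
    unfolding norm_metric_def merge_def
    using H_closed[OF h1] H_closed[OF h2] s_closed[OF q1] s_closed[OF q2]
    by (simp add: inv_mult m_ac)
qed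

lemma coarse_split: "coarse_map (carrier G) dG (carrier K \<times> carrier (G Mod H)) dKQ split"
proof (rule coarse_mapI_finite_values)
  show "split ` carrier G \<subseteq> carrier K \<times> carrier (G Mod H)"
    using split_closed by (simp add: image_subset_iff)
next
  fix dlt :: real
  let ?B = "{g \<in> carrier G. NG g \<le> dlt}"
  let ?V = "\<Union>g\<in>?B. (\<lambda>D. NK (g \<otimes> inv D) + NQ (H #> g)) ` section_increments G (G Mod H) s (H #> g)"
  have "finite ?V"
    using proper_normD(4)[OF norm_G] finite_increments by simp
  moreover have "dKQ (split x) (split y) \<in> ?V"
    if x: "x \<in> carrier G" and y: "y \<in> carrier G" and "dG x y \<le> dlt" for x y
  proof -
    have "inv x \<otimes> y \<in> ?B"
      using x y \<open>dG x y \<le> dlt\<close> unfolding norm_metric_def by simp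
    moreover obtain D where "D \<in> section_increments G (G Mod H) s (H #> (inv x \<otimes> y))"
      and "dKQ (split x) (split y) = NK ((inv x \<otimes> y) \<otimes> inv D) + NQ (H #> (inv x \<otimes> y))"
      using dist_split[OF x y] .
    ultimately show ?thesis by blast
  qed
  ultimately show "\<exists>V. finite V \<and> (\<forall>x\<in>carrier G. \<forall>y\<in>carrier G. dG x y \<le> dlt \<longrightarrow> dKQ (split x) (split y) \<in> V)"
    by (intro exI[of _ ?V] conjI ballI impI)
qed

lemma coarse_merge: "coarse_map (carrier K \<times> carrier (G Mod H)) dKQ (carrier G) dG merge"
proof (rule coarse_mapI_finite_values)
  show "merge ` (carrier K \<times> carrier (G Mod H)) \<subseteq> carrier G"
    using merge_closed by auto
next
  fix dlt :: real
  let ?BK = "{h \<in> carrier K. NK h \<le> dlt}" and ?BQ = "{p \<in> carrier (G Mod H). NQ p \<le> dlt}"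
  let ?V = "\<Union>h\<in>?BK. \<Union>p\<in>?BQ. (\<lambda>D. NG (h \<otimes> D)) ` section_increments G (G Mod H) s p"
  have "finite ?V"
    using proper_normD(4)[OF norm_K] proper_normD(4)[OF norm_Q] finite_increments by simp
  moreover have "dG (merge z1) (merge z2) \<in> ?V"
    if z1: "z1 \<in> carrier K \<times> carrier (G Mod H)" and z2: "z2 \<in> carrier K \<times> carrier (G Mod H)"
      and "dKQ z1 z2 \<le> dlt" for z1 z2
  proof -
    obtain h1 q1 h2 q2 where z: "z1 = (h1, q1)" "z2 = (h2, q2)"
      by (cases z1, cases z2) simp
    then have h: "h1 \<in> H" "h2 \<in> H" and q: "q1 \<in> carrier (G Mod H)" "q2 \<in> carrier (G Mod H)"
      using z1 z2 unfolding z mem_Times_iff fst_conv snd_conv carrier_K by blast+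
    let ?p = "inv\<^bsub>G Mod H\<^esub> q1 \<otimes>\<^bsub>G Mod H\<^esub> q2"
    have "NK (inv h1 \<otimes> h2) + NQ ?p = dK h1 h2 + dQ q1 q2"
      by (simp only: dK_eq[OF h(1)] norm_metric_def[of "G Mod H"])
    also have "\<dots> = dKQ z1 z2"
      by (simp only: z sum_metric_def fst_conv snd_conv)
    also have "\<dots> \<le> dlt" by fact
    finally have dist: "NK (inv h1 \<otimes> h2) + NQ ?p \<le> dlt" .
    have hh: "inv h1 \<otimes> h2 \<in> H"
      using subgroup.m_closed[OF subgroup_H subgroup.m_inv_closed[OF subgroup_H h(1)] h(2)] .
    have p: "?p \<in> carrier (G Mod H)"
      using Q.m_closed[OF Q.inv_closed[OF q(1)] q(2)] .
    have "0 \<le> NK (inv h1 \<otimes> h2)" "0 \<le> NQ ?p"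
      using K.proper_norm_nonneg[OF norm_K, unfolded carrier_K, OF hh] Q.proper_norm_nonneg[OF norm_Q p] .
    then have "NK (inv h1 \<otimes> h2) \<le> dlt" "NQ ?p \<le> dlt"
      using dist by linarith+
    then have ball: "inv h1 \<otimes> h2 \<in> ?BK" "?p \<in> ?BQ"
      using hh p unfolding carrier_K by blast+
    obtain D where "D \<in> section_increments G (G Mod H) s ?p"
      and "dG (merge z1) (merge z2) = NG ((inv h1 \<otimes> h2) \<otimes> D)"
      using dist_merge[OF h q] unfolding z .
    then show ?thesis using ball by blast
  qed
  ultimately show "\<exists>V. finite V \<and> (\<forall>z1\<in>carrier K \<times> carrier (G Mod H). \<forall>z2\<in>carrier K \<times> carrier (G Mod H).
      dKQ z1 z2 \<le> dlt \<longrightarrow> dG (merge z1) (merge z2) \<in> V)"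
    by (intro exI[of _ ?V] conjI ballI impI)
qed

lemma dKQ_self: "z \<in> carrier K \<times> carrier (G Mod H) \<Longrightarrow> dKQ z z = 0"
  using K.norm_metric_self[OF norm_K] Q.norm_metric_self[OF norm_Q] by (auto simp: sum_metric_def)

theorem coarsely_split_quotient: "coarsely_split K G (G Mod H) (\<lambda>h. h) (\<lambda>g. H #> g)"
  unfolding coarsely_split_def
proof (rule exI[of _ NK], rule exI[of _ NG], rule exI[of _ NQ], rule exI[of _ split],
    intro conjI norm_K norm_G norm_Q)
  show "coarse_equivalence (carrier G) dG (carrier K \<times> carrier (G Mod H)) dKQ split"
    unfolding coarse_equivalence_def
  proof (intro conjI exI[of _ merge] coarse_split coarse_merge)
    show "bounded_distance (carrier G) dG (merge \<circ> split) id"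
      using merge_split norm_metric_self[OF norm_G] by (intro bounded_distance_eqI) auto
    show "bounded_distance (carrier K \<times> carrier (G Mod H)) dKQ (split \<circ> merge) id"
      using split_merge dKQ_self by (intro bounded_distance_eqI) auto
  qed
  have "split h = (h, \<one>\<^bsub>G Mod H\<^esub>)" if "h \<in> H" for h
    using split_merge[OF that Q.one_closed] H_closed[OF that] s_one by (simp add: merge_def)
  then show "bounded_distance (carrier K) dKQ (split \<circ> (\<lambda>h. h)) (\<lambda>k. (k, \<one>\<^bsub>G Mod H\<^esub>))"
    using dKQ_self by (intro bounded_distance_eqI) auto
  show "bounded_distance (carrier G) dQ (snd \<circ> split) (\<lambda>g. H #> g)"
    using Q.norm_metric_self[OF norm_Q] by (intro bounded_distance_eqI) (auto simp: split_def)
qed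

end

theorem mainTheorem4:
  fixes G :: "'a monoid" and H :: "'a set"
  assumes "comm_group G"
    and "countable (carrier G)"
    and "subgroup H G"
    and "\<forall>x\<in>carrier (G Mod H). odd (group.ord (G Mod H) x)"
  shows "coarsely_split (G\<lparr>carrier := H\<rparr>) G (G Mod H) (\<lambda>h. h) (\<lambda>g. H #>\<^bsub>G\<^esub> g)"
proof -
  interpret comm_group G by fact
  have quotient: "comm_group (G Mod H)"
    using assms(3) by (rule abelian_FactGroup)
  have countable_quotient: "countable (carrier (G Mod H))"
    using assms(2) by (simp add: carrier_FactGroup)
  have torsion: "0 < group.ord (G Mod H) x" if "x \<in> carrier (G Mod H)" for x
    using assms(4) that odd_pos by blast
  obtain s where s: "\<And>q. q \<in> carrier (G Mod H) \<Longrightarrow> s q \<in> carrier G"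
      "\<And>q. q \<in> carrier (G Mod H) \<Longrightarrow> H #>\<^bsub>G\<^esub> s q = q" "s \<one>\<^bsub>G Mod H\<^esub> = \<one>\<^bsub>G\<^esub>"
      "\<And>p. p \<in> carrier (G Mod H) \<Longrightarrow> finite (section_increments G (G Mod H) s p)"
    using torsion_quotient_section[OF quotient is_group
        normal.r_coset_hom_Mod[OF subgroup_imp_normal[OF assms(3)]]
        carrier_FactGroup[symmetric] countable_quotient torsion] by blast
  obtain NK where NK: "proper_norm (G\<lparr>carrier := H\<rparr>) NK"
    using group.proper_norm_exists[OF subgroup.subgroup_is_group[OF assms(3) is_group]]
      countable_subset[OF subgroup.subset[OF assms(3)] assms(2)] by auto
  obtain NG where NG: "proper_norm G NG"
    using proper_norm_exists[OF assms(2)] by blast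
  obtain NQ where NQ: "proper_norm (G Mod H) NQ"
    using group.proper_norm_exists[OF comm_group.axioms(2)[OF quotient] countable_quotient] by blast
  interpret coarse_splitting G H s NK NG NQ
    by (rule coarse_splitting.intro[OF assms(1) coarse_splitting_axioms.intro[OF assms(3) s NK NG NQ]])
  show ?thesis by (rule coarsely_split_quotient)
qed

end
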